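(* For all non-negative integers $n$ and $p$, $$\begin{aligned}\sum_{k=1}^n\frac{k}{2^{2k}}\binom{2(k+p)}{k+p}\binom{k+p}{k}\left(O_{k+p}-O_p\right)&=\frac{n}{2^{2n}}\binom{2(p+1)}{p+1}^{-1}\binom{2p}{p}\binom{2(n+p+1)}{n+p+1}\binom{n+p+1}{n}\left(O_{n+p+1}-O_{p+1}\right)\\&\quad-\frac{1}{2^{2n-2}}\binom{2(p+2)}{p+2}^{-1}\binom{2p}{p}\binom{2(n+p+1)}{n+p+1}\binom{n+p+1}{n-1}\left(O_{n+p+1}-O_{p+2}\right).\end{aligned}$$ In particular, $\sum_{k=1}^n\frac{k}{2^{2k}}\binom{2k}{k}O_k=\frac{n(n+1)}{2^{2n+1}}\binom{2(n+1)}{n+1}(O_{n+1}-1)-\frac{n(n+1)}{3\cdot2^{2n}}\binom{2(n+1)}{n+1}\left(O_{n+1}-\frac43\right)$.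
   Context: The odd harmonic numbers are $O_n=\sum_{k=1}^n\frac{1}{2k-1}$, $O_0=0$. Binomial coefficients $\binom{a}{-1}$ are $0$. *)

theory Defs
  imports Complex_Main
begin

definition oddH :: "nat \<Rightarrow> real" where
  "oddH n = (\<Sum>k=1..n. 1 / (2 * real k - 1))"

definition binomZ :: "nat \<Rightarrow> int \<Rightarrow> real" where
  "binomZ a k = (if k < 0 then 0 else real (a choose nat k))"

end

theory Submission
  imports Defs
begin

text \<open>Both identities follow from a closed form for the partial sums. With \<open>N = n + p + 1\<close>,
  the \<open>n\<close>-th partial sum equals \<open>C(2N, N) C(N, n) / 4^n\<close> times a combination of
  \<open>O_N - O_{p+1}\<close> and \<open>O_N - O_{p+2}\<close> whose coefficients are linear in \<open>n\<close>. This is an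
  induction on \<open>n\<close>: passing from \<open>n\<close> to \<open>n + 1\<close> multiplies the binomial weight by
  \<open>(2N + 1) / (2(n + 1))\<close>, the new summand is \<open>(p + 1) / 4\<close> times the old weight, and
  \<open>O_{N+1} = O_N + 1 / (2N + 1)\<close>. The stated right-hand sides are this closed form with the
  central binomial coefficients at \<open>p + 1\<close> and \<open>p + 2\<close> expressed through \<open>C(2p, p)\<close>;
  the second identity is the case \<open>p = 0\<close>.\<close>

lemma oddH_0 [simp]: "oddH 0 = 0"
  by (simp add: oddH_def)

lemma oddH_Suc: "oddH (Suc m) = oddH m + 1 / (2 * real m + 1)"
  unfolding oddH_def by (simp add: algebra_simps)

lemma Suc_times_central_binomial:
  "Suc m * (2 * Suc m choose Suc m) = 2 * (2 * m + 1) * (2 * m choose m)"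
proof -
  have "Suc m * (2 * Suc m choose Suc m) = 2 * (Suc m * (Suc (2 * m) choose m))"
    using Suc_times_binomial[of m "Suc (2 * m)"] by simp
  also have "Suc m * (Suc (2 * m) choose m) = (2 * m + 1) * (2 * m choose m)"
    using binomial_absorb_comp[of "Suc (2 * m)" m] by simp
  finally show ?thesis by simp
qed

lemma real_central_binomial_Suc:
  "real (2 * Suc m choose Suc m) = 2 * (2 * real m + 1) / (real m + 1) * real (2 * m choose m)"
proof -
  have "real (Suc m * (2 * Suc m choose Suc m)) = real (2 * (2 * m + 1) * (2 * m choose m))"
    by (simp only: Suc_times_central_binomial)
  then show ?thesis
    by (simp add: field_simps del: binomial_Suc_Suc)
qed

lemma real_binomial_Suc_Suc:
  "real (Suc n choose Suc k) = (real n + 1) / (real k + 1) * real (n choose k)"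
proof -
  have "real (Suc k * (Suc n choose Suc k)) = real (Suc n * (n choose k))"
    by (simp only: Suc_times_binomial)
  then show ?thesis
    by (simp add: field_simps del: binomial_Suc_Suc)
qed

definition binom_weight :: "nat \<Rightarrow> nat \<Rightarrow> real" where
  "binom_weight p n =
     real ((2 * (n + p + 1)) choose (n + p + 1)) * real ((n + p + 1) choose n) / 4 ^ n"

lemma binom_weight_Suc:
  "binom_weight p (Suc n) = binom_weight p n * (2 * real (n + p + 1) + 1) / (2 * (real n + 1))"
proof -
  define N where "N = n + p + 1"
  have "Suc n + p + 1 = Suc N" unfolding N_def by simp
  then have "binom_weight p (Suc n)
      = real (2 * Suc N choose Suc N) * real (Suc N choose Suc n) / 4 ^ Suc n"
    unfolding binom_weight_def by simp
  also have "\<dots> = binom_weight p n * (2 * real N + 1) / (2 * (real n + 1))"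
    unfolding real_central_binomial_Suc real_binomial_Suc_Suc binom_weight_def N_def[symmetric]
    by (simp add: divide_simps) (simp add: algebra_simps)
  finally show ?thesis unfolding N_def .
qed

lemma summand_Suc_eq_binom_weight:
  "real (Suc n) / 2 ^ (2 * Suc n) * real ((2 * (Suc n + p)) choose (Suc n + p))
     * real ((Suc n + p) choose Suc n)
   = binom_weight p n * (real p + 1) / 4"
proof -
  have "real (Suc n * (Suc (n + p) choose Suc n)) = real (Suc p * (Suc (n + p) choose n))"
    by (simp only: Suc_times_binomial_add)
  then have lower: "real (Suc n) * real ((Suc n + p) choose Suc n)
      = (real p + 1) * real ((n + p + 1) choose n)"
    by (simp only: of_nat_mult) simp
  have "(2::real) ^ (2 * Suc n) = 4 * 4 ^ n"
    by (simp add: power_mult)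
  then have "real (Suc n) / 2 ^ (2 * Suc n) * real ((2 * (Suc n + p)) choose (Suc n + p))
          * real ((Suc n + p) choose Suc n)
        = real (Suc n) * real ((Suc n + p) choose Suc n)
          * real ((2 * (n + p + 1)) choose (n + p + 1)) / (4 * 4 ^ n)"
    by (simp del: binomial_Suc_Suc)
  also have "\<dots> = binom_weight p n * (real p + 1) / 4"
    unfolding lower binom_weight_def by (simp add: ac_simps del: binomial_Suc_Suc)
  finally show ?thesis .
qed

definition harmonic_factor :: "nat \<Rightarrow> nat \<Rightarrow> real" where
  "harmonic_factor p n = real n * (real p + 1) / (2 * (2 * real p + 1))
     * ((oddH (n + p + 1) - oddH (p + 1))
        - 2 / (2 * real p + 3) * (oddH (n + p + 1) - oddH (p + 2)))"

lemma harmonic_factor_Suc: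
  "(2 * real (n + p + 1) + 1) / (2 * (real n + 1)) * harmonic_factor p (Suc n)
   = harmonic_factor p n + (real p + 1) / 4 * (oddH (n + p + 1) - oddH p)"
proof -
  have step_N: "oddH (Suc n + p + 1) = oddH (n + p + 1) + 1 / (2 * real (n + p + 1) + 1)"
    using oddH_Suc[of "n + p + 1"] by simp
  have step_p: "oddH (p + 1) = oddH p + 1 / (2 * real p + 1)"
    using oddH_Suc[of p] by simp
  have step_p2: "oddH (p + 2) = oddH p + 1 / (2 * real p + 1) + 1 / (2 * real p + 3)"
    using oddH_Suc[of p] oddH_Suc[of "Suc p"] by (simp add: numeral_2_eq_2 algebra_simps)
  have "real n \<ge> 0" "real p \<ge> 0" by auto
  then show ?thesis
    unfolding harmonic_factor_def step_N step_p step_p2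
    by (simp add: divide_simps) (simp add: algebra_simps)
qed

lemma sum_eq_binom_weight_times_harmonic_factor:
  "(\<Sum>k=1..n. real k / 2 ^ (2 * k) * real ((2 * (k + p)) choose (k + p))
      * real ((k + p) choose k) * (oddH (k + p) - oddH p))
   = binom_weight p n * harmonic_factor p n"
proof (induction n)
  case 0
  show ?case by (simp add: harmonic_factor_def)
next
  case (Suc n)
  have "(\<Sum>k=1..Suc n. real k / 2 ^ (2 * k) * real ((2 * (k + p)) choose (k + p))
      * real ((k + p) choose k) * (oddH (k + p) - oddH p))
     = binom_weight p n * harmonic_factor p n
       + real (Suc n) / 2 ^ (2 * Suc n) * real ((2 * (Suc n + p)) choose (Suc n + p))
         * real ((Suc n + p) choose Suc n) * (oddH (Suc n + p) - oddH p)"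
    by (simp only: sum.cl_ivl_Suc Suc.IH) simp
  also have "\<dots> = binom_weight p n
      * (harmonic_factor p n + (real p + 1) / 4 * (oddH (n + p + 1) - oddH p))"
    unfolding summand_Suc_eq_binom_weight by (simp add: algebra_simps)
  also have "\<dots> = binom_weight p (Suc n) * harmonic_factor p (Suc n)"
    by (simp only: harmonic_factor_Suc[symmetric] binom_weight_Suc) (simp add: algebra_simps)
  finally show ?case .
qed

lemma binom_weight_first_coefficient:
  "real n / 2 ^ (2 * n) / real ((2 * (p + 1)) choose (p + 1)) * real ((2 * p) choose p)
     * real ((2 * (n + p + 1)) choose (n + p + 1)) * real ((n + p + 1) choose n)
   = binom_weight p n * (real n * (real p + 1) / (2 * (2 * real p + 1)))"
proof -
  have "(2::real) ^ (2 * n) = 4 ^ n"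
    by (simp add: power_mult)
  moreover have "real ((2 * (p + 1)) choose (p + 1))
      = 2 * (2 * real p + 1) / (real p + 1) * real (2 * p choose p)"
    using real_central_binomial_Suc[of p] by simp
  moreover have "real (2 * p choose p) > 0"
    by simp
  ultimately show ?thesis
    unfolding binom_weight_def
    by (simp add: divide_simps del: binomial_Suc_Suc) (simp add: algebra_simps)
qed

lemma binom_weight_second_coefficient:
  "1 / 2 powi (2 * int (Suc m) - 2) / real ((2 * (p + 2)) choose (p + 2)) * real ((2 * p) choose p)
     * real ((2 * (Suc m + p + 1)) choose (Suc m + p + 1))
     * binomZ (Suc m + p + 1) (int (Suc m) - 1)
   = binom_weight p (Suc m) * (real (Suc m) * (real p + 1) / ((2 * real p + 1) * (2 * real p + 3)))"
proof -
  have power: "(2::real) powi (2 * int (Suc m) - 2) = 4 ^ Suc m / 4"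
    by (simp add: power_int_def nat_mult_distrib power_mult)
  have central: "real ((2 * (p + 2)) choose (p + 2))
      = 2 * (2 * real (Suc p) + 1) / (real (Suc p) + 1)
        * (2 * (2 * real p + 1) / (real p + 1) * real (2 * p choose p))"
    unfolding add_2_eq_Suc' by (simp only: real_central_binomial_Suc)
  have "real (Suc m * (Suc (m + Suc p) choose Suc m))
      = real (Suc (Suc p) * (Suc (m + Suc p) choose m))"
    by (simp only: Suc_times_binomial_add)
  then have lower: "binomZ (Suc m + p + 1) (int (Suc m) - 1)
      = (real m + 1) / (real p + 2) * real ((Suc m + p + 1) choose Suc m)"
    unfolding binomZ_def by (simp add: field_simps del: binomial_Suc_Suc)
  have "real (2 * p choose p) > 0"
    by simp
  then show ?thesis
    unfolding binom_weight_def power central lower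
    by (simp add: divide_simps del: binomial_Suc_Suc)
      (simp add: algebra_simps del: binomial_Suc_Suc)
qed

lemma odd_harmonic_binomial_sum:
  fixes n p :: nat
  shows "(\<Sum>k=1..n. real k / 2 ^ (2 * k) * real ((2 * (k + p)) choose (k + p))
            * real ((k + p) choose k) * (oddH (k + p) - oddH p))
       = real n / 2 ^ (2 * n) / real ((2 * (p + 1)) choose (p + 1)) * real ((2 * p) choose p)
            * real ((2 * (n + p + 1)) choose (n + p + 1)) * real ((n + p + 1) choose n)
            * (oddH (n + p + 1) - oddH (p + 1))
         - 1 / 2 powi (2 * int n - 2) / real ((2 * (p + 2)) choose (p + 2)) * real ((2 * p) choose p)
            * real ((2 * (n + p + 1)) choose (n + p + 1)) * binomZ (n + p + 1) (int n - 1)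
            * (oddH (n + p + 1) - oddH (p + 2))"
proof (cases n)
  case 0
  then show ?thesis by (simp add: binomZ_def)
next
  case (Suc m)
  have "binom_weight p n * harmonic_factor p n
      = binom_weight p n * (real n * (real p + 1) / (2 * (2 * real p + 1)))
          * (oddH (n + p + 1) - oddH (p + 1))
        - binom_weight p n * (real n * (real p + 1) / ((2 * real p + 1) * (2 * real p + 3)))
          * (oddH (n + p + 1) - oddH (p + 2))"
    using of_nat_0_le_iff[of p] unfolding harmonic_factor_def
    by (simp add: divide_simps) (simp add: algebra_simps)
  then show ?thesis
    unfolding sum_eq_binom_weight_times_harmonic_factor binom_weight_first_coefficient
      Suc binom_weight_second_coefficient
    by simp
qed

lemma odd_harmonic_central_binomial_sum:
  fixes n :: nat
  shows "(\<Sum>k=1..n. real k / 2 ^ (2 * k) * real ((2 * k) choose k) * oddH k)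
       = real n * real (n + 1) / 2 ^ (2 * n + 1) * real ((2 * (n + 1)) choose (n + 1))
            * (oddH (n + 1) - 1)
         - real n * real (n + 1) / (3 * 2 ^ (2 * n)) * real ((2 * (n + 1)) choose (n + 1))
            * (oddH (n + 1) - 4 / 3)" (is "?lhs = ?rhs")
proof -
  have initial: "oddH (0 + 1) = 1" "oddH (0 + 2) = 4 / 3"
    by (simp_all add: oddH_def numeral_2_eq_2)
  have "(2::real) ^ (2 * n + 1) = 2 * 4 ^ n" "(2::real) ^ (2 * n) = 4 ^ n"
    by (simp_all add: power_mult)
  then have "binom_weight 0 n * harmonic_factor 0 n = ?rhs"
    unfolding binom_weight_def harmonic_factor_def initial
    by (simp add: field_simps del: binomial_Suc_Suc)
  then show ?thesis
    using sum_eq_binom_weight_times_harmonic_factor[where p = 0] by simp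
qed

theorem theorem15:
  fixes n p :: nat
  shows "((\<Sum>k=1..n. real k / 2 ^ (2 * k) * real ((2 * (k + p)) choose (k + p))
            * real ((k + p) choose k) * (oddH (k + p) - oddH p))
       = real n / 2 ^ (2 * n) / real ((2 * (p + 1)) choose (p + 1)) * real ((2 * p) choose p)
            * real ((2 * (n + p + 1)) choose (n + p + 1)) * real ((n + p + 1) choose n)
            * (oddH (n + p + 1) - oddH (p + 1))
         - 1 / 2 powi (2 * int n - 2) / real ((2 * (p + 2)) choose (p + 2)) * real ((2 * p) choose p)
            * real ((2 * (n + p + 1)) choose (n + p + 1)) * binomZ (n + p + 1) (int n - 1)
            * (oddH (n + p + 1) - oddH (p + 2)))
    \<and> ((\<Sum>k=1..n. real k / 2 ^ (2 * k) * real ((2 * k) choose k) * oddH k)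
       = real n * real (n + 1) / 2 ^ (2 * n + 1) * real ((2 * (n + 1)) choose (n + 1))
            * (oddH (n + 1) - 1)
         - real n * real (n + 1) / (3 * 2 ^ (2 * n)) * real ((2 * (n + 1)) choose (n + 1))
            * (oddH (n + 1) - 4 / 3))"
  by (rule conjI[OF odd_harmonic_binomial_sum odd_harmonic_central_binomial_sum])
end
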